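(* Let $G$ be a finite abelian group, let $G_1,\dots,G_n,H$ be subgroups of $G$, and fix a character $\chi$ on $G$. Let $K=\bigcap_{i=1}^nG_i$. Then the number of tuples $(\chi_1,\dots,\chi_n)\in\widehat{G}^n$ such that $\chi_i(g)=1$ for all $g\in G_i$ and all $1\le i\le n$, and $\bigl(\prod_{i=1}^n\chi_i\bigr)(h)=\chi(h)$ for all $h\in H$, equals \[ \frac{|H\cap K|}{|H|}\cdot\prod_{i=1}^n\frac{|G|}{|G_i|}\cdot\llbracket\chi(H\cap K)=1\rrbracket. \]
   Context: $\widehat{G}$ is the group of characters (homomorphisms to the complex unit circle) of $G$. $\llbracket P\rrbracket$ is $1$ if $P$ holds and $0$ otherwise; $\chi(H\cap K)=1$ means $\chi$ is trivial on $H\cap K$. *)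

theory Defs
  imports Complex_Main "HOL-Algebra.Coset"
begin

text \<open>To make the set of characters a well-defined set of functions (for counting),
  characters are required to be 0 outside the carrier.\<close>
definition character :: "('a, 'b) monoid_scheme \<Rightarrow> ('a \<Rightarrow> complex) \<Rightarrow> bool" where
  "character G \<chi> \<longleftrightarrow>
     (\<forall>x\<in>carrier G. \<forall>y\<in>carrier G. \<chi> (x \<otimes>\<^bsub>G\<^esub> y) = \<chi> x * \<chi> y) \<and>
     (\<forall>x\<in>carrier G. cmod (\<chi> x) = 1) \<and>
     (\<forall>x. x \<notin> carrier G \<longrightarrow> \<chi> x = 0)"

definition characters :: "('a, 'b) monoid_scheme \<Rightarrow> ('a \<Rightarrow> complex) set" where
  "characters G = {\<chi>. character G \<chi>}"

end

theory Submission
  imports Defs "HOL-Library.FuncSet" "HOL-Algebra.FiniteProduct"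
begin

(* A tuple with chi_i trivial on G_i is a tuple of elements of the
   annihilators G_i^perp, and the condition on H is detected by the average over H of
   (prod chi_i) * conj chi, which is 1 or 0.  Exchanging the sums, the sum of c h over c in G_i^perp
   is |G|/|G_i| if h is in G_i and 0 otherwise, so only h in H \<inter> K survive, and the average of
   conj chi over the subgroup H \<inter> K is the indicator of chi being trivial there.

   The two facts about annihilators used, |S^perp| * |S| = |G| and that S^perp separates the
   points outside S, come from counting extensions: if g is not in S and m is the order of g
   modulo S, a character phi of S has exactly m extensions to the subgroup generated by S and g,
   as the value at g can be any m-th root of phi (g^m). *)

definition characters_on :: "('a, 'b) monoid_scheme \<Rightarrow> 'a set \<Rightarrow> ('a \<Rightarrow> complex) set" where
  "characters_on G S = {f. (\<forall>x\<in>S. \<forall>y\<in>S. f (x \<otimes>\<^bsub>G\<^esub> y) = f x * f y) \<and>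
     (\<forall>x\<in>S. cmod (f x) = 1) \<and> (\<forall>x. x \<notin> S \<longrightarrow> f x = 0)}"

definition character_extensions ::
    "('a, 'b) monoid_scheme \<Rightarrow> 'a set \<Rightarrow> 'a set \<Rightarrow> ('a \<Rightarrow> complex) \<Rightarrow> ('a \<Rightarrow> complex) set" where
  "character_extensions G S T \<phi> = {\<psi> \<in> characters_on G T. \<forall>x\<in>S. \<psi> x = \<phi> x}"

definition annihilator :: "('a, 'b) monoid_scheme \<Rightarrow> 'a set \<Rightarrow> ('a \<Rightarrow> complex) set" where
  "annihilator G S = {c \<in> characters G. \<forall>s\<in>S. c s = 1}"

lemma characters_on_carrier: "characters_on G (carrier G) = characters G"
  unfolding characters_on_def characters_def character_def by simp

lemma characters_onD:
  assumes "f \<in> characters_on G S"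
  shows characters_on_mult_hom: "\<And>x y. x \<in> S \<Longrightarrow> y \<in> S \<Longrightarrow> f (x \<otimes>\<^bsub>G\<^esub> y) = f x * f y"
    and characters_on_norm: "\<And>x. x \<in> S \<Longrightarrow> cmod (f x) = 1"
    and characters_on_outside: "\<And>x. x \<notin> S \<Longrightarrow> f x = 0"
  using assms by (auto simp: characters_on_def)

lemma characters_on_nonzero: "f \<in> characters_on G S \<Longrightarrow> x \<in> S \<Longrightarrow> f x \<noteq> 0"
  using characters_on_norm by fastforce

lemma characters_on_mult_cnj: "f \<in> characters_on G S \<Longrightarrow> x \<in> S \<Longrightarrow> f x * cnj (f x) = 1"
  by (metis complex_norm_square characters_on_norm of_real_1 power_one)

lemma characters_on_times:
  "f \<in> characters_on G S \<Longrightarrow> h \<in> characters_on G S \<Longrightarrow> (\<lambda>x. f x * h x) \<in> characters_on G S"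
  unfolding characters_on_def by (simp add: mult_ac norm_mult)

lemma characters_on_cnj: "f \<in> characters_on G S \<Longrightarrow> (\<lambda>x. cnj (f x)) \<in> characters_on G S"
  unfolding characters_on_def by simp

lemma characters_on_eqI:
  assumes "f \<in> characters_on G S" "h \<in> characters_on G S" "\<And>x. x \<in> S \<Longrightarrow> f x = h x"
  shows "f = h"
  using assms by (metis characters_on_outside ext)

lemma annihilator_times:
  "c \<in> annihilator G S \<Longrightarrow> d \<in> annihilator G S \<Longrightarrow> (\<lambda>x. c x * d x) \<in> annihilator G S"
  unfolding annihilator_def characters_on_carrier[symmetric] by (simp add: characters_on_times)

lemma annihilator_cnj: "c \<in> annihilator G S \<Longrightarrow> (\<lambda>x. cnj (c x)) \<in> annihilator G S"
  unfolding annihilator_def characters_on_carrier[symmetric] by (simp add: characters_on_cnj)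

lemma characters_cnj_cancel:
  assumes "c \<in> characters G" "d \<in> characters G"
  shows "(\<lambda>x. cnj (c x) * (c x * d x)) = d"
proof
  fix x
  show "cnj (c x) * (c x * d x) = d x"
  proof (cases "x \<in> carrier G")
    case True
    then have "cnj (c x) * c x = 1"
      using characters_on_mult_cnj assms(1) unfolding characters_on_carrier[symmetric]
      by (simp add: mult.commute)
    then show ?thesis by (simp add: mult.assoc[symmetric])
  next
    case False
    then have "d x = 0"
      using characters_on_outside assms(2) unfolding characters_on_carrier[symmetric] by metis
    then show ?thesis by simp
  qed
qed

lemma card_character_extensions_tower:
  assumes T: "subgroup T G" and ST: "S \<subseteq> T" and TU: "T \<subseteq> U"
    and fin: "finite (character_extensions G S T \<phi>)"
    and c: "0 < c" "\<And>\<psi>. \<psi> \<in> character_extensions G S T \<phi> \<Longrightarrow> card (character_extensions G T U \<psi>) = c"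
  shows "card (character_extensions G S U \<phi>) = card (character_extensions G S T \<phi>) * c"
proof -
  let ?E = "character_extensions G S T \<phi>"
  have restrict: "(\<lambda>x. if x \<in> T then \<chi> x else 0) \<in> characters_on G T"
    if "\<chi> \<in> characters_on G U" for \<chi>
    using that TU subgroup.m_closed[OF T] unfolding characters_on_def by (auto simp: subset_eq)
  have "character_extensions G S U \<phi> = (\<Union>\<psi>\<in>?E. character_extensions G T U \<psi>)"
  proof (intro equalityI subsetI)
    fix \<chi> assume "\<chi> \<in> character_extensions G S U \<phi>"
    then have "(\<lambda>x. if x \<in> T then \<chi> x else 0) \<in> ?E"
      and "\<chi> \<in> character_extensions G T U (\<lambda>x. if x \<in> T then \<chi> x else 0)"
      using restrict ST unfolding character_extensions_def by auto
    then show "\<chi> \<in> (\<Union>\<psi>\<in>?E. character_extensions G T U \<psi>)" by blast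
  qed (use ST in \<open>auto simp: character_extensions_def\<close>)
  moreover have "character_extensions G T U \<psi>\<^sub>1 \<inter> character_extensions G T U \<psi>\<^sub>2 = {}"
    if "\<psi>\<^sub>1 \<in> ?E" "\<psi>\<^sub>2 \<in> ?E" "\<psi>\<^sub>1 \<noteq> \<psi>\<^sub>2" for \<psi>\<^sub>1 \<psi>\<^sub>2
  proof -
    have "\<psi>\<^sub>1 x = \<psi>\<^sub>2 x" if "\<chi> \<in> character_extensions G T U \<psi>\<^sub>1"
      "\<chi> \<in> character_extensions G T U \<psi>\<^sub>2" "x \<in> T" for \<chi> x
      using that unfolding character_extensions_def by auto
    with that show ?thesis
      unfolding character_extensions_def by (blast intro: characters_on_eqI)
  qed
  moreover have "finite (character_extensions G T U \<psi>)" if "\<psi> \<in> ?E" for \<psi>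
    using c that card.infinite by fastforce
  ultimately show ?thesis using fin c(2) by (simp add: card_UN_disjoint)
qed

lemma sum_eq_0_if_bij_scales:
  fixes f :: "'a \<Rightarrow> 'b::idom"
  assumes "bij_betw \<sigma> A A" and "\<And>x. x \<in> A \<Longrightarrow> f (\<sigma> x) = w * f x" and "w \<noteq> 1"
  shows "sum f A = 0"
proof -
  have "sum f A = (\<Sum>x\<in>A. f (\<sigma> x))" using sum.reindex_bij_betw[OF assms(1)] by metis
  also have "\<dots> = w * sum f A" using assms(2) by (simp add: sum_distrib_left)
  finally have "(1 - w) * sum f A = 0" by (simp add: algebra_simps)
  then show ?thesis using assms(3) by simp
qed

lemma prod_if_all:
  fixes f :: "'i \<Rightarrow> 'b::comm_semiring_1"
  assumes "finite I"
  shows "(\<Prod>i\<in>I. if P i then f i else 0) = (if \<forall>i\<in>I. P i then \<Prod>i\<in>I. f i else 0)"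
proof (cases "\<forall>i\<in>I. P i")
  case False
  then obtain j where "j \<in> I" "\<not> P j" by blast
  then show ?thesis using assms False by (auto intro!: prod_zero)
qed simp

context group
begin

lemma subgroup_nat_pow_closed: "subgroup S G \<Longrightarrow> x \<in> S \<Longrightarrow> x [^] (k::nat) \<in> S"
  by (induction k) (auto simp: subgroup.m_closed subgroup.one_closed)

lemma characters_on_one: "subgroup S G \<Longrightarrow> f \<in> characters_on G S \<Longrightarrow> f \<one> = 1"
  by (metis characters_on_mult_hom characters_on_nonzero mult_cancel_right2 r_one
      subgroup.one_closed subgroup.mem_carrier)

lemma characters_on_pow:
  assumes S: "subgroup S G" and f: "f \<in> characters_on G S" and x: "x \<in> S"
  shows "f (x [^] (k::nat)) = f x ^ k"
proof (induction k)
  case 0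
  then show ?case using characters_on_one[OF S f] by simp
next
  case (Suc k)
  have "x [^] k \<in> S" using S x by (rule subgroup_nat_pow_closed)
  then show ?case
    using Suc characters_on_mult_hom[OF f _ x] by simp
qed

lemma sum_multiplicative_subgroup:
  fixes f :: "'a \<Rightarrow> 'c::idom"
  assumes S: "subgroup S G" and f: "\<And>x y. x \<in> S \<Longrightarrow> y \<in> S \<Longrightarrow> f (x \<otimes> y) = f x * f y"
  shows "(\<Sum>s\<in>S. f s) = (if \<forall>s\<in>S. f s = 1 then of_nat (card S) else 0)"
proof (cases "\<forall>s\<in>S. f s = 1")
  case False
  then obtain a where a: "a \<in> S" "f a \<noteq> 1" by blast
  have "bij_betw (\<lambda>s. a \<otimes> s) S S"
    by (rule bij_betw_byWitness[where f' = "\<lambda>s. inv a \<otimes> s"])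
      (use a S in \<open>auto simp: subgroup.m_closed subgroup.m_inv_closed subgroup.mem_carrier
        m_assoc[symmetric]\<close>)
  then have "(\<Sum>s\<in>S. f s) = 0"
    using a f by (intro sum_eq_0_if_bij_scales) auto
  then show ?thesis using False by (simp only: if_False)
qed simp

lemma sum_times_cnj_character:
  assumes H: "subgroup H G" and f: "\<And>x y. x \<in> H \<Longrightarrow> y \<in> H \<Longrightarrow> f (x \<otimes> y) = f x * f y"
    and \<chi>: "\<chi> \<in> characters G"
  shows "(\<Sum>h\<in>H. f h * cnj (\<chi> h)) = (if \<forall>h\<in>H. f h = \<chi> h then of_nat (card H) else 0)"
proof -
  have \<chi>': "\<chi> \<in> characters_on G (carrier G)" unfolding characters_on_carrier by (rule \<chi>)
  have "(\<Sum>h\<in>H. f h * cnj (\<chi> h)) = (if \<forall>h\<in>H. f h * cnj (\<chi> h) = 1 then of_nat (card H) else 0)"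
    by (rule sum_multiplicative_subgroup[OF H])
      (simp add: f characters_on_mult_hom[OF \<chi>'] subgroup.mem_carrier[OF H] mult_ac)
  moreover have "f h * cnj (\<chi> h) = 1 \<longleftrightarrow> f h = \<chi> h" if "h \<in> H" for h
  proof -
    have "\<chi> h * cnj (\<chi> h) = 1"
      using characters_on_mult_cnj[OF \<chi>'] subgroup.mem_carrier[OF H that] .
    then show ?thesis by (metis mult.commute mult_1_right mult.left_commute)
  qed
  ultimately show ?thesis by simp
qed

end

locale finite_comm_group = comm_group +
  assumes finite_carrier: "finite (carrier G)"

lemma (in finite_comm_group) card_carrier_pos: "0 < card (carrier G)"
  using finite_carrier by (auto simp: card_gt_0_iff)

locale subgroup_adjoin = finite_comm_group G for G (structure) +
  fixes S and g
  assumes S: "subgroup S G" and g: "g \<in> carrier G" and g_notin: "g \<notin> S"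
begin

definition ord_mod :: nat where
  "ord_mod = (LEAST k. 0 < k \<and> g [^] k \<in> S)"

definition adjoined :: "'a set" where
  "adjoined = {s \<otimes> g [^] (k::nat) | s k. s \<in> S}"

lemma S_carrier: "x \<in> S \<Longrightarrow> x \<in> carrier G"
  by (rule subgroup.mem_carrier[OF S])

lemma ord_mod_props:
  shows ord_mod_pos: "0 < ord_mod" and pow_ord_mod_in: "g [^] ord_mod \<in> S"
    and pow_notin_below_ord_mod: "\<And>k. 0 < k \<Longrightarrow> k < ord_mod \<Longrightarrow> g [^] k \<notin> S"
proof -
  have "g [^] card (carrier G) \<in> S"
    using power_order_eq_one[OF finite_carrier g] subgroup.one_closed[OF S] by simp
  then have ex: "\<exists>k::nat. 0 < k \<and> g [^] k \<in> S" using card_carrier_pos by blast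
  show "0 < ord_mod" "g [^] ord_mod \<in> S"
    using LeastI_ex[OF ex] unfolding ord_mod_def by simp_all
  show "\<And>k. 0 < k \<Longrightarrow> k < ord_mod \<Longrightarrow> g [^] k \<notin> S"
    using not_less_Least unfolding ord_mod_def by blast
qed

lemma ord_mod_ge_2: "2 \<le> ord_mod"
proof -
  have "ord_mod \<noteq> 1"
    using pow_ord_mod_in g g_notin by (intro notI) simp
  then show ?thesis using ord_mod_pos by linarith
qed

lemma pow_div_mod: "g [^] j = (g [^] ord_mod) [^] (j div ord_mod) \<otimes> g [^] (j mod ord_mod)"
proof -
  have "g [^] j = g [^] (ord_mod * (j div ord_mod) + j mod ord_mod)" by simp
  also have "\<dots> = (g [^] ord_mod) [^] (j div ord_mod) \<otimes> g [^] (j mod ord_mod)"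
    using g by (simp add: nat_pow_mult nat_pow_pow)
  finally show ?thesis .
qed

lemma adjoined_normal_form:
  assumes "t \<in> adjoined"
  obtains s k where "s \<in> S" "k < ord_mod" "t = s \<otimes> g [^] k"
proof -
  obtain s j where sj: "s \<in> S" "t = s \<otimes> g [^] (j::nat)" using assms unfolding adjoined_def by blast
  have "s \<otimes> (g [^] ord_mod) [^] (j div ord_mod) \<in> S"
    using sj pow_ord_mod_in S by (simp add: subgroup.m_closed subgroup_nat_pow_closed)
  moreover have "t = (s \<otimes> (g [^] ord_mod) [^] (j div ord_mod)) \<otimes> g [^] (j mod ord_mod)"
    using sj pow_div_mod[of j] S_carrier g by (simp add: m_assoc)
  ultimately show ?thesis using that[OF _ mod_less_divisor[OF ord_mod_pos]] by blast
qed

lemma normal_form_unique: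
  assumes "s \<in> S" "s' \<in> S" "k < ord_mod" "k' < ord_mod" "s \<otimes> g [^] k = s' \<otimes> g [^] k'"
  shows "s = s' \<and> k = k'"
proof -
  have "s = s' \<and> k = k'"
    if s: "s \<in> S" "s' \<in> S" and k: "k \<le> k'" "k' < ord_mod" and eq: "s \<otimes> g [^] k = s' \<otimes> g [^] k'"
    for s s' k k'
  proof -
    have "s \<otimes> g [^] k = (s' \<otimes> g [^] (k' - k)) \<otimes> g [^] k"
      using eq s k g S_carrier by (simp add: m_assoc nat_pow_mult)
    then have s_eq: "s = s' \<otimes> g [^] (k' - k)"
      using s g S_carrier by (meson m_closed nat_pow_closed right_cancel)
    then have "g [^] (k' - k) = inv s' \<otimes> s"
      using s g S_carrier by (simp add: m_assoc[symmetric])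
    also have "\<dots> \<in> S" using s S by (simp add: subgroup.m_closed subgroup.m_inv_closed)
    finally have "k' - k = 0" using pow_notin_below_ord_mod[of "k' - k"] k by linarith
    then show ?thesis using s_eq k s S_carrier by simp
  qed
  then show ?thesis using assms by (metis nle_le)
qed

lemma adjoined_eq_image: "adjoined = (\<lambda>(s, k). s \<otimes> g [^] k) ` (S \<times> {..<ord_mod})"
proof (intro equalityI subsetI)
  fix t assume "t \<in> adjoined"
  then show "t \<in> (\<lambda>(s, k). s \<otimes> g [^] k) ` (S \<times> {..<ord_mod})"
    by (rule adjoined_normal_form) auto
qed (auto simp: adjoined_def)

lemma card_adjoined: "card adjoined = ord_mod * card S"
proof -
  have "inj_on (\<lambda>(s, k). s \<otimes> g [^] k) (S \<times> {..<ord_mod})"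
    by (auto simp: inj_on_def dest: normal_form_unique)
  then show ?thesis
    by (simp add: adjoined_eq_image card_image card_cartesian_product)
qed

lemma adjoined_mult:
  assumes "s \<in> S" "s' \<in> S"
  shows "(s \<otimes> g [^] (k::nat)) \<otimes> (s' \<otimes> g [^] (k'::nat)) = (s \<otimes> s') \<otimes> g [^] (k + k')"
  using assms S_carrier g by (simp add: m_ac nat_pow_mult[symmetric])

lemma card_less_card_adjoined: "card S < card adjoined"
  using card_adjoined ord_mod_ge_2 subgroup.finite_imp_card_positive[OF S finite_carrier] by simp

lemma subset_adjoined: "S \<subseteq> adjoined"
proof
  fix s assume "s \<in> S"
  moreover have "s = s \<otimes> g [^] (0::nat)" using S_carrier[OF \<open>s \<in> S\<close>] by simp
  ultimately show "s \<in> adjoined" unfolding adjoined_def by blast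
qed

lemma g_in_adjoined: "g \<in> adjoined"
proof -
  have "g = \<one> \<otimes> g [^] (1::nat)" using g by simp
  then show ?thesis unfolding adjoined_def using subgroup.one_closed[OF S] by blast
qed

lemma adjoined_subgroup: "subgroup adjoined G"
proof (rule subgroupI)
  show "adjoined \<subseteq> carrier G" unfolding adjoined_def using S_carrier g by auto
  show "adjoined \<noteq> {}" using g_in_adjoined by blast
next
  fix a b assume "a \<in> adjoined" "b \<in> adjoined"
  then obtain s s' and k k' :: nat where "a = s \<otimes> g [^] k" "s \<in> S" "b = s' \<otimes> g [^] k'" "s' \<in> S"
    unfolding adjoined_def by blast
  then show "a \<otimes> b \<in> adjoined"
    unfolding adjoined_def using adjoined_mult S by (blast intro: subgroup.m_closed)
next
  fix a assume "a \<in> adjoined"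
  then obtain s and k :: nat where a: "a = s \<otimes> g [^] k" "s \<in> S" unfolding adjoined_def by blast
  define N where "N = card (carrier G)"
  have "0 < N" using finite_carrier g unfolding N_def by (auto simp: card_gt_0_iff)
  then have "k * (N - 1) + k = k * N" by (cases N) auto
  then have "g [^] (k * (N - 1)) \<otimes> g [^] k = (g [^] N) [^] k"
    using g by (simp add: nat_pow_mult nat_pow_pow mult.commute)
  then have "inv a = inv s \<otimes> g [^] (k * (N - 1))"
    using a g S_carrier power_order_eq_one[OF finite_carrier g] unfolding N_def
    by (simp add: inv_mult inv_equality)
  then show "inv a \<in> adjoined"
    unfolding adjoined_def using a S by (blast intro: subgroup.m_inv_closed)
qed

lemma extension_value:
  assumes "\<psi> \<in> characters_on G adjoined" and "s \<in> S"
  shows "\<psi> (s \<otimes> g [^] (k::nat)) = \<psi> s * \<psi> g ^ k"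
proof -
  have "s \<in> adjoined" "g [^] k \<in> adjoined"
    using assms(2) subset_adjoined subgroup_nat_pow_closed[OF adjoined_subgroup g_in_adjoined] by auto
  then show ?thesis
    using characters_on_mult_hom[OF assms(1)] characters_on_pow[OF adjoined_subgroup assms(1) g_in_adjoined]
    by simp
qed

lemma extension_eqI:
  assumes "\<psi>\<^sub>1 \<in> character_extensions G S adjoined \<phi>" "\<psi>\<^sub>2 \<in> character_extensions G S adjoined \<phi>"
    and "\<psi>\<^sub>1 g = \<psi>\<^sub>2 g"
  shows "\<psi>\<^sub>1 = \<psi>\<^sub>2"
proof (rule characters_on_eqI)
  show \<psi>\<^sub>1: "\<psi>\<^sub>1 \<in> characters_on G adjoined" and \<psi>\<^sub>2: "\<psi>\<^sub>2 \<in> characters_on G adjoined"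
    using assms(1,2) unfolding character_extensions_def by auto
  fix t assume "t \<in> adjoined"
  then obtain s and k :: nat where s: "s \<in> S" and t: "t = s \<otimes> g [^] k"
    unfolding adjoined_def by blast
  have "\<psi>\<^sub>1 s = \<psi>\<^sub>2 s" using assms(1,2) s unfolding character_extensions_def by simp
  then show "\<psi>\<^sub>1 t = \<psi>\<^sub>2 t"
    unfolding t extension_value[OF \<psi>\<^sub>1 s] extension_value[OF \<psi>\<^sub>2 s] assms(3) by simp
qed

lemma extension_value_root:
  assumes "\<psi> \<in> character_extensions G S adjoined \<phi>"
  shows "\<psi> g ^ ord_mod = \<phi> (g [^] ord_mod)"
proof -
  have "\<psi> \<in> characters_on G adjoined" "\<psi> (g [^] ord_mod) = \<phi> (g [^] ord_mod)"
    using assms pow_ord_mod_in unfolding character_extensions_def by auto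
  then show ?thesis using characters_on_pow[OF adjoined_subgroup _ g_in_adjoined] by metis
qed

definition normal_form :: "'a \<Rightarrow> 'a \<times> nat" where
  "normal_form t = (SOME (s, k). s \<in> S \<and> k < ord_mod \<and> t = s \<otimes> g [^] k)"

lemma normal_form_eq:
  assumes "s \<in> S" "k < ord_mod"
  shows "normal_form (s \<otimes> g [^] k) = (s, k)"
proof -
  let ?P = "\<lambda>(s', k'). s' \<in> S \<and> k' < ord_mod \<and> s \<otimes> g [^] k = s' \<otimes> g [^] k'"
  have "?P (normal_form (s \<otimes> g [^] k))"
    unfolding normal_form_def by (rule someI[of ?P "(s, k)"]) (use assms in simp)
  then show ?thesis
    using normal_form_unique[OF assms(1) _ assms(2)] by (auto split: prod.splits)
qed

definition extend :: "('a \<Rightarrow> complex) \<Rightarrow> complex \<Rightarrow> 'a \<Rightarrow> complex" where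
  "extend \<phi> z t = (if t \<in> adjoined then \<phi> (fst (normal_form t)) * z ^ snd (normal_form t) else 0)"

context
  fixes \<phi> z
  assumes \<phi>: "\<phi> \<in> characters_on G S" and z: "z ^ ord_mod = \<phi> (g [^] ord_mod)"
begin

lemma extend_pow:
  assumes s: "s \<in> S"
  shows "extend \<phi> z (s \<otimes> g [^] j) = \<phi> s * z ^ j"
proof -
  let ?s = "s \<otimes> (g [^] ord_mod) [^] (j div ord_mod)"
  have gm: "(g [^] ord_mod) [^] (j div ord_mod) \<in> S"
    by (rule subgroup_nat_pow_closed[OF S pow_ord_mod_in])
  then have "?s \<in> S" using s S by (simp add: subgroup.m_closed)
  moreover have "s \<otimes> g [^] j = ?s \<otimes> g [^] (j mod ord_mod)"
    using s g gm S_carrier pow_div_mod[of j] by (simp add: m_assoc)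
  ultimately have "extend \<phi> z (s \<otimes> g [^] j) = \<phi> ?s * z ^ (j mod ord_mod)"
    using normal_form_eq[of ?s "j mod ord_mod"] ord_mod_pos subgroup.m_closed[OF adjoined_subgroup]
      subset_adjoined subgroup_nat_pow_closed[OF adjoined_subgroup g_in_adjoined]
    unfolding extend_def by auto
  also have "\<phi> ?s = \<phi> s * z ^ (ord_mod * (j div ord_mod))"
    using characters_on_mult_hom[OF \<phi> s gm] characters_on_pow[OF S \<phi> pow_ord_mod_in] z
    by (simp add: power_mult)
  finally show ?thesis by (simp add: mult.assoc power_add[symmetric])
qed

lemma extend_at_g: "extend \<phi> z g = z"
  using extend_pow[OF subgroup.one_closed[OF S], of 1] characters_on_one[OF S \<phi>] g by simp

lemma extend_mem_extensions: "extend \<phi> z \<in> character_extensions G S adjoined \<phi>"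
proof -
  have "cmod z ^ ord_mod = 1"
    using z characters_on_norm[OF \<phi> pow_ord_mod_in] by (metis norm_power)
  then have norm_z: "cmod z = 1"
    using power_eq_imp_eq_base[of "cmod z" ord_mod 1] ord_mod_pos by simp
  have "extend \<phi> z \<in> characters_on G adjoined"
    unfolding characters_on_def
  proof (intro CollectI conjI ballI allI impI)
    fix x y assume "x \<in> adjoined" "y \<in> adjoined"
    then obtain s s' and k k' :: nat where
      x: "s \<in> S" "x = s \<otimes> g [^] k" and y: "s' \<in> S" "y = s' \<otimes> g [^] k'"
      unfolding adjoined_def by blast
    then show "extend \<phi> z (x \<otimes> y) = extend \<phi> z x * extend \<phi> z y"
      using adjoined_mult extend_pow S characters_on_mult_hom[OF \<phi>]
      by (simp add: subgroup.m_closed power_add mult_ac)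
  next
    fix x assume "x \<in> adjoined"
    then obtain s and k :: nat where "s \<in> S" "x = s \<otimes> g [^] k" unfolding adjoined_def by blast
    then show "cmod (extend \<phi> z x) = 1"
      using extend_pow characters_on_norm[OF \<phi>] norm_z by (simp add: norm_mult norm_power)
  qed (simp add: extend_def)
  moreover have "extend \<phi> z s = \<phi> s" if "s \<in> S" for s
    using extend_pow[OF that, of 0] S_carrier[OF that] by simp
  ultimately show ?thesis unfolding character_extensions_def by simp
qed

end

lemma card_extensions_adjoined:
  assumes \<phi>: "\<phi> \<in> characters_on G S"
  shows "card (character_extensions G S adjoined \<phi>) = ord_mod"
proof -
  let ?E = "character_extensions G S adjoined \<phi>" and ?c = "\<phi> (g [^] ord_mod)"
  have "inj_on (\<lambda>\<psi>. \<psi> g) ?E"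
    by (rule inj_onI) (rule extension_eqI)
  moreover have "(\<lambda>\<psi>. \<psi> g) ` ?E = {z. z ^ ord_mod = ?c}"
  proof (intro equalityI subsetI)
    fix z assume "z \<in> {z. z ^ ord_mod = ?c}"
    then have "extend \<phi> z \<in> ?E" "z = extend \<phi> z g"
      using extend_mem_extensions[OF \<phi>] extend_at_g[OF \<phi>] by simp_all
    then show "z \<in> (\<lambda>\<psi>. \<psi> g) ` ?E" by blast
  qed (auto simp: extension_value_root)
  ultimately have "card ?E = card {z. z ^ ord_mod = ?c}"
    by (simp add: bij_betw_def bij_betw_same_card)
  also have "\<dots> = ord_mod"
    using card_nth_roots characters_on_nonzero[OF \<phi> pow_ord_mod_in] ord_mod_pos by blast
  finally show ?thesis .
qed

end

context finite_comm_group
begin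

lemma card_character_extensions:
  assumes "subgroup S G" and "\<phi> \<in> characters_on G S"
  shows "card (character_extensions G S (carrier G) \<phi>) * card S = card (carrier G)"
  using assms
proof (induction "card (carrier G) - card S" arbitrary: S \<phi> rule: less_induct)
  case less
  note S = less.prems(1) and \<phi> = less.prems(2)
  show ?case
  proof (cases "S = carrier G")
    case True
    then have "character_extensions G S (carrier G) \<phi> = {\<phi>}"
      using \<phi> by (auto simp: character_extensions_def intro: characters_on_eqI)
    then show ?thesis using True by simp
  next
    case False
    then obtain g where "g \<in> carrier G" "g \<notin> S" using subgroup.subset[OF S] by blast
    then interpret subgroup_adjoin G S g
      using S by (simp add: subgroup_adjoin_def subgroup_adjoin_axioms_def finite_comm_group_axioms)
    define c where "c = card (rcosets adjoined)"
    have index: "c * card adjoined = card (carrier G)"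
      using lagrange[OF adjoined_subgroup] unfolding c_def order_def .
    then have "0 < c" using card_carrier_pos by (metis mult_0 gr0I)
    have "card adjoined \<le> card (carrier G)"
      by (rule card_mono[OF finite_carrier subgroup.subset[OF adjoined_subgroup]])
    then have IH: "card (character_extensions G adjoined (carrier G) \<psi>) * card adjoined
        = card (carrier G)" if "\<psi> \<in> characters_on G adjoined" for \<psi>
      using less.hyps[OF _ adjoined_subgroup that] card_less_card_adjoined by linarith
    have "card (character_extensions G adjoined (carrier G) \<psi>) = c"
      if "\<psi> \<in> character_extensions G S adjoined \<phi>" for \<psi>
    proof -
      have "card (character_extensions G adjoined (carrier G) \<psi>) * card adjoined = c * card adjoined"
        using IH that index unfolding character_extensions_def by simp
      then show ?thesis using card_less_card_adjoined by simp
    qed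
    moreover have "finite (character_extensions G S adjoined \<phi>)"
      using card_extensions_adjoined[OF \<phi>] ord_mod_pos by (simp add: card_ge_0_finite)
    ultimately have "card (character_extensions G S (carrier G) \<phi>) = ord_mod * c"
      using card_character_extensions_tower[OF adjoined_subgroup subset_adjoined
          subgroup.subset[OF adjoined_subgroup] _ \<open>0 < c\<close>] card_extensions_adjoined[OF \<phi>]
      by simp
    then show ?thesis using index card_adjoined by (simp add: mult_ac)
  qed
qed

lemma card_annihilator:
  assumes "subgroup S G"
  shows "card (annihilator G S) * card S = card (carrier G)"
proof -
  let ?triv = "\<lambda>x. if x \<in> S then 1 else 0 :: complex"
  have "?triv \<in> characters_on G S"
    using assms unfolding characters_on_def by (auto simp: subgroup.m_closed)
  moreover have "annihilator G S = character_extensions G S (carrier G) ?triv"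
    unfolding annihilator_def character_extensions_def characters_on_carrier by simp
  ultimately show ?thesis using card_character_extensions[OF assms] by simp
qed

lemma finite_characters: "finite (characters G)"
proof -
  have "annihilator G {\<one>} = characters G"
    using characters_on_one[OF subgroup_self] unfolding annihilator_def characters_on_carrier by auto
  then have "card (characters G) = card (carrier G)"
    using card_annihilator[OF triv_subgroup] by simp
  then show ?thesis using card_carrier_pos by (simp add: card_ge_0_finite)
qed

lemma annihilator_separates:
  assumes S: "subgroup S G" and h: "h \<in> carrier G" "h \<notin> S"
  shows "\<exists>c\<in>annihilator G S. c h \<noteq> 1"
proof (rule ccontr)
  assume "\<not> ?thesis"
  then have triv_h: "c h = 1" if "c \<in> annihilator G S" for c using that by blast
  interpret subgroup_adjoin G S h
    using S h by (simp add: subgroup_adjoin_def subgroup_adjoin_axioms_def finite_comm_group_axioms)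
  have "annihilator G adjoined = annihilator G S"
  proof (intro equalityI subsetI)
    fix c assume c: "c \<in> annihilator G S"
    then have c': "c \<in> characters_on G (carrier G)"
      unfolding annihilator_def characters_on_carrier by simp
    have "c t = 1" if "t \<in> adjoined" for t
    proof -
      obtain s and k :: nat where "s \<in> S" "t = s \<otimes> h [^] k" using \<open>t \<in> adjoined\<close> unfolding adjoined_def by blast
      then show ?thesis
        using c triv_h[OF c] h S_carrier characters_on_mult_hom[OF c'] characters_on_pow[OF subgroup_self c']
        unfolding annihilator_def by simp
    qed
    then show "c \<in> annihilator G adjoined" using c unfolding annihilator_def by simp
  qed (use subset_adjoined in \<open>auto simp: annihilator_def\<close>)
  then have "card (annihilator G S) * (ord_mod * card S) = card (annihilator G S) * card S"
    using card_annihilator[OF S] card_annihilator[OF adjoined_subgroup] card_adjoined by simp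
  moreover have "card (annihilator G S) * card S \<noteq> 0"
    using card_annihilator[OF S] card_carrier_pos by simp
  ultimately show False using ord_mod_ge_2 by simp
qed

lemma sum_annihilator:
  assumes S: "subgroup S G" and h: "h \<in> carrier G"
  shows "(\<Sum>c\<in>annihilator G S. c h)
    = (if h \<in> S then of_nat (card (carrier G)) / of_nat (card S) else 0)"
proof (cases "h \<in> S")
  case True
  then have "(\<Sum>c\<in>annihilator G S. c h) = of_nat (card (annihilator G S))"
    unfolding annihilator_def by simp
  also have "\<dots> = of_nat (card (carrier G)) / of_nat (card S)"
    using card_annihilator[OF S] subgroup.finite_imp_card_positive[OF S finite_carrier]
    by (simp add: field_simps flip: of_nat_mult)
  finally show ?thesis using True by simp
next
  case False
  then obtain c\<^sub>0 where c\<^sub>0: "c\<^sub>0 \<in> annihilator G S" "c\<^sub>0 h \<noteq> 1"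
    using annihilator_separates[OF S h] by blast
  have "bij_betw (\<lambda>c x. c\<^sub>0 x * c x) (annihilator G S) (annihilator G S)"
  proof (rule bij_betw_byWitness[where f' = "\<lambda>c x. cnj (c\<^sub>0 x) * c x"])
    have "c\<^sub>0 \<in> characters G" using c\<^sub>0 unfolding annihilator_def by simp
    then show "\<forall>c\<in>annihilator G S. (\<lambda>x. cnj (c\<^sub>0 x) * (c\<^sub>0 x * c x)) = c"
      using characters_cnj_cancel unfolding annihilator_def by blast
    moreover have "(\<lambda>x. cnj (c\<^sub>0 x)) \<in> characters G"
      using annihilator_cnj[OF c\<^sub>0(1)] unfolding annihilator_def by simp
    ultimately show "\<forall>c\<in>annihilator G S. (\<lambda>x. c\<^sub>0 x * (cnj (c\<^sub>0 x) * c x)) = c"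
      using characters_cnj_cancel[of "\<lambda>x. cnj (c\<^sub>0 x)"] unfolding annihilator_def by auto
  qed (use annihilator_times annihilator_cnj[OF c\<^sub>0(1)] c\<^sub>0(1) in auto)
  then have "(\<Sum>c\<in>annihilator G S. c h) = 0"
    using sum_eq_0_if_bij_scales[OF _ _ c\<^sub>0(2), of _ _ "\<lambda>c. c h"] by simp
  then show ?thesis using False by simp
qed

lemma card_tuples_with_product:
  fixes A :: "'i \<Rightarrow> ('a \<Rightarrow> complex) set"
  assumes I: "finite I" and A: "\<And>i. i \<in> I \<Longrightarrow> A i \<subseteq> characters G"
    and H: "subgroup H G" and \<chi>: "\<chi> \<in> characters G"
  shows "of_nat (card {cs \<in> \<Pi>\<^sub>E i\<in>I. A i. \<forall>h\<in>H. (\<Prod>i\<in>I. cs i h) = \<chi> h})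
    = (\<Sum>h\<in>H. cnj (\<chi> h) * (\<Prod>i\<in>I. \<Sum>c\<in>A i. c h)) / of_nat (card H)"
proof -
  let ?P = "\<Pi>\<^sub>E i\<in>I. A i"
  have finite_A: "finite (A i)" if "i \<in> I" for i
    using A[OF that] finite_characters by (rule finite_subset)
  have "of_nat (card {cs \<in> ?P. \<forall>h\<in>H. (\<Prod>i\<in>I. cs i h) = \<chi> h})
      = (\<Sum>cs\<in>?P. if \<forall>h\<in>H. (\<Prod>i\<in>I. cs i h) = \<chi> h then 1 else 0 :: complex)"
    using sum.inter_filter[of ?P "\<lambda>_. 1::complex"] I finite_A by (simp add: finite_PiE)
  also have "\<dots> = (\<Sum>cs\<in>?P. (\<Sum>h\<in>H. (\<Prod>i\<in>I. cs i h) * cnj (\<chi> h)) / of_nat (card H))"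
  proof (rule sum.cong[OF refl])
    fix cs assume "cs \<in> ?P"
    then have cs: "cs i \<in> characters_on G (carrier G)" if "i \<in> I" for i
      using that A unfolding characters_on_carrier by auto
    have "(\<Prod>i\<in>I. cs i (x \<otimes> y)) = (\<Prod>i\<in>I. cs i x) * (\<Prod>i\<in>I. cs i y)"
      if "x \<in> H" "y \<in> H" for x y
      unfolding prod.distrib[symmetric]
      by (rule prod.cong[OF refl]) (use that subgroup.mem_carrier[OF H] cs characters_on_mult_hom in metis)
    then show "(if \<forall>h\<in>H. (\<Prod>i\<in>I. cs i h) = \<chi> h then 1 else 0)
        = (\<Sum>h\<in>H. (\<Prod>i\<in>I. cs i h) * cnj (\<chi> h)) / of_nat (card H)"
      using sum_times_cnj_character[OF H _ \<chi>] subgroup.finite_imp_card_positive[OF H finite_carrier]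
      by simp
  qed
  also have "\<dots> = (\<Sum>h\<in>H. cnj (\<chi> h) * (\<Prod>i\<in>I. \<Sum>c\<in>A i. c h)) / of_nat (card H)"
    by (simp add: prod_sum_PiE[OF I finite_A] sum_divide_distrib[symmetric]
        sum_distrib_left sum_distrib_right mult_ac flip: sum.swap[of _ H])
  finally show ?thesis .
qed

lemma card_character_tuples:
  fixes Gs :: "'i \<Rightarrow> 'a set" and I :: "'i set"
  assumes I: "finite I" and Gs: "\<And>i. i \<in> I \<Longrightarrow> subgroup (Gs i) G"
    and H: "subgroup H G" and \<chi>: "\<chi> \<in> characters G"
  defines "L \<equiv> H \<inter> (\<Inter>i\<in>I. Gs i)"
  shows "of_nat (card {cs \<in> I \<rightarrow>\<^sub>E characters G.
            (\<forall>i\<in>I. \<forall>g\<in>Gs i. cs i g = 1) \<and> (\<forall>h\<in>H. (\<Prod>i\<in>I. cs i h) = \<chi> h)})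
    = (of_nat (card L) / of_nat (card H)
        * (\<Prod>i\<in>I. of_nat (card (carrier G)) / of_nat (card (Gs i)))
        * (if \<forall>h\<in>L. \<chi> h = 1 then 1 else 0) :: complex)"
proof -
  define index where "index = (\<Prod>i\<in>I. of_nat (card (carrier G)) / of_nat (card (Gs i)) :: complex)"
  have L: "subgroup L G"
    using subgroups_Inter[of "insert H (Gs ` I)"] H Gs unfolding L_def by auto
  have "{cs \<in> I \<rightarrow>\<^sub>E characters G. (\<forall>i\<in>I. \<forall>g\<in>Gs i. cs i g = 1) \<and> (\<forall>h\<in>H. (\<Prod>i\<in>I. cs i h) = \<chi> h)}
      = {cs \<in> \<Pi>\<^sub>E i\<in>I. annihilator G (Gs i). \<forall>h\<in>H. (\<Prod>i\<in>I. cs i h) = \<chi> h}"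
    unfolding annihilator_def by (auto simp: PiE_iff)
  then have "of_nat (card {cs \<in> I \<rightarrow>\<^sub>E characters G.
            (\<forall>i\<in>I. \<forall>g\<in>Gs i. cs i g = 1) \<and> (\<forall>h\<in>H. (\<Prod>i\<in>I. cs i h) = \<chi> h)})
      = (\<Sum>h\<in>H. cnj (\<chi> h) * (\<Prod>i\<in>I. \<Sum>c\<in>annihilator G (Gs i). c h)) / of_nat (card H)"
    using card_tuples_with_product[OF I _ H \<chi>] by (simp add: annihilator_def)
  also have "\<dots> = (\<Sum>h\<in>H. cnj (\<chi> h) * (if h \<in> L then index else 0)) / of_nat (card H)"
    unfolding index_def L_def using sum_annihilator Gs subgroup.mem_carrier[OF H]
    by (simp add: prod_if_all[OF I] cong: prod.cong)
  also have "(\<Sum>h\<in>H. cnj (\<chi> h) * (if h \<in> L then index else 0)) = index * (\<Sum>h\<in>L. cnj (\<chi> h))"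
  proof -
    have "{h \<in> H. h \<in> L} = L" unfolding L_def by auto
    then have "(\<Sum>h\<in>L. cnj (\<chi> h)) = (\<Sum>h\<in>H. if h \<in> L then cnj (\<chi> h) else 0)"
      using sum.inter_filter[OF finite_subset[OF subgroup.subset[OF H] finite_carrier]] by metis
    then show ?thesis by (simp add: sum_distrib_left if_distrib mult.commute cong: if_cong)
  qed
  also have "(\<Sum>h\<in>L. cnj (\<chi> h)) = (if \<forall>h\<in>L. \<chi> h = 1 then of_nat (card L) else 0)"
    using sum_multiplicative_subgroup[OF L, of "\<lambda>h. cnj (\<chi> h)"] \<chi> subgroup.mem_carrier[OF L]
      characters_on_mult_hom[of \<chi> G "carrier G"]
    unfolding characters_on_carrier by simp
  finally show ?thesis unfolding index_def by simp
qed

end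

theorem lemma6p10:
  fixes G :: "('a, 'b) monoid_scheme" and Gs :: "nat \<Rightarrow> 'a set" and H :: "'a set"
    and \<chi> :: "'a \<Rightarrow> complex" and n :: nat
  assumes "comm_group G" and "finite (carrier G)"
    and "\<And>i. i \<in> {1..n} \<Longrightarrow> subgroup (Gs i) G"
    and "subgroup H G"
    and "character G \<chi>"
  defines "K \<equiv> carrier G \<inter> (\<Inter>i\<in>{1..n}. Gs i)"
  shows "real (card {cs \<in> {1..n} \<rightarrow>\<^sub>E characters G.
                 (\<forall>i\<in>{1..n}. \<forall>g\<in>Gs i. cs i g = 1) \<and>
                 (\<forall>h\<in>H. (\<Prod>i\<in>{1..n}. cs i h) = \<chi> h)})
         = real (card (H \<inter> K)) / real (card H)
           * (\<Prod>i\<in>{1..n}. real (card (carrier G)) / real (card (Gs i)))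
           * (if (\<forall>h\<in>H \<inter> K. \<chi> h = 1) then 1 else 0)"
    (is "?count = ?formula")
proof -
  interpret finite_comm_group G
    using assms(1,2) by (simp add: finite_comm_group_def finite_comm_group_axioms_def)
  have "H \<inter> K = H \<inter> (\<Inter>i\<in>{1..n}. Gs i)"
    using subgroup.subset[OF assms(4)] unfolding K_def by auto
  moreover have "\<chi> \<in> characters G" using assms(5) unfolding characters_def by simp
  ultimately have "complex_of_real ?count = complex_of_real ?formula"
    using card_character_tuples[of "{1..n}" Gs H \<chi>] assms(3,4) by simp
  then show ?thesis by (rule of_real_eq_iff[THEN iffD1])
qed

end
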